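(* Let $f\in\mathrm{LC}$ satisfy (H$_1$): there exist $\alpha,\beta\in L^1_{loc}$ with $\beta\ge0$ such that $2\langle f(t,x),x\rangle\le\alpha(t)|x|^2+\beta(t)$ for a.e. $(t,x)\in\mathbb R^{1+N}$. If $x(\cdot)$ is a solution of $\dot x=f(t,x)$ defined on an interval $I$, then $2\langle f(t,x(t)),x(t)\rangle\le\alpha(t)|x(t)|^2+\beta(t)$ for a.e. $t\in I$.
   Context: $\mathrm{LC}$: Borel measurable $f:\mathbb R\times\mathbb R^N\to\mathbb R^N$ such that for every compact $K$ there are $m^K,l^K\in L^1_{loc}$ with $|f(t,x)|\le m^K(t)$ and $|f(t,x)-f(t,y)|\le l^K(t)|x-y|$ for $x,y\in K$, a.e. $t$. Solutions are in the Carathéodory sense (absolutely continuous, satisfying the equation a.e.). $\langle\cdot,\cdot\rangle$ is the Euclidean inner product. *)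

theory Defs
  imports "HOL-Analysis.Analysis"
begin

definition loc_integrable :: "(real \<Rightarrow> real) \<Rightarrow> bool" where
  "loc_integrable g \<longleftrightarrow> (\<forall>a b. set_integrable lborel {a..b} g)"

definition LC :: "(real \<Rightarrow> 'a::euclidean_space \<Rightarrow> 'a) \<Rightarrow> bool" where
  "LC f \<longleftrightarrow> (\<lambda>(t, x). f t x) \<in> borel_measurable borel \<and>
     (\<forall>K. compact K \<longrightarrow>
        (\<exists>m l. loc_integrable m \<and> loc_integrable l \<and>
           (AE t in lebesgue. \<forall>x\<in>K. \<forall>y\<in>K.
               norm (f t x) \<le> m t \<and> norm (f t x - f t y) \<le> l t * norm (x - y))))"

definition absolutely_continuous_on :: "real set \<Rightarrow> (real \<Rightarrow> 'a::real_normed_vector) \<Rightarrow> bool" where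
  "absolutely_continuous_on S x \<longleftrightarrow>
     (\<forall>\<epsilon>>0. \<exists>\<delta>>0. \<forall>(n::nat) (a::nat \<Rightarrow> real) b.
        (\<forall>k<n. a k \<le> b k \<and> {a k..b k} \<subseteq> S) \<and>
        (\<forall>j<n. \<forall>k<n. j \<noteq> k \<longrightarrow> b j \<le> a k \<or> b k \<le> a j) \<and>
        (\<Sum>k<n. b k - a k) < \<delta> \<longrightarrow>
        (\<Sum>k<n. norm (x (b k) - x (a k))) < \<epsilon>)"

definition caratheodory_solution ::
    "(real \<Rightarrow> 'a::euclidean_space \<Rightarrow> 'a) \<Rightarrow> real set \<Rightarrow> (real \<Rightarrow> 'a) \<Rightarrow> bool" where
  "caratheodory_solution f I x \<longleftrightarrow>
     is_interval I \<and>
     (\<forall>a b. {a..b} \<subseteq> I \<longrightarrow> absolutely_continuous_on {a..b} x) \<and>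
     (AE t in lebesgue. t \<in> I \<longrightarrow> (x has_vector_derivative f t (x t)) (at t within I))"

end

theory Submission
  imports Defs
begin

text \<open>For a.e. \<open>t\<close> the map \<open>f t\<close> is locally Lipschitz, hence continuous, so the set of \<open>y\<close>
  satisfying the inequality at time \<open>t\<close> is closed. By Fubini it has full measure for a.e. \<open>t\<close>,
  and a closed set of full measure is the whole space. Thus for a.e. \<open>t\<close> the inequality holds
  for every \<open>y\<close>, in particular for \<open>y = x t\<close>; no property of the solution is needed.\<close>

lemma AE_lebesgue_pair_imp_AE_AE:
  fixes P :: "'a::euclidean_space \<Rightarrow> 'b::euclidean_space \<Rightarrow> bool"
  assumes "AE z in lebesgue. P (fst z) (snd z)"
  shows "AE t in lebesgue. AE y in lebesgue. P t y"
proof -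
  have "AE z in lborel. P (fst z) (snd z)"
    using assms by (simp add: AE_completion_iff)
  then have "AE z in lborel \<Otimes>\<^sub>M lborel. P (fst z) (snd z)"
    unfolding lborel_prod .
  then have "AE t in lborel. AE y in lborel. P t y"
    using lborel_pair.AE_pair by fastforce
  then show ?thesis
    by (simp add: AE_completion_iff)
qed

lemma continuous_on_if_lipschitz_on_cballs:
  fixes g :: "'a::euclidean_space \<Rightarrow> 'b::real_normed_vector"
  assumes "\<And>n::nat. \<forall>u\<in>cball 0 (real n). \<forall>v\<in>cball 0 (real n).
             norm (g u - g v) \<le> L n * norm (u - v)"
  shows "continuous_on UNIV g"
proof (rule continuous_at_imp_continuous_on, intro ballI)
  fix y :: 'a
  obtain n :: nat where n: "norm y + 1 \<le> real n"
    using real_arch_simple by blast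
  have "lipschitz_on (max (L n) 0) (cball 0 (real n)) g"
  proof (rule lipschitz_onI)
    fix u v assume "u \<in> cball (0::'a) (real n)" "v \<in> cball (0::'a) (real n)"
    then have "norm (g u - g v) \<le> L n * norm (u - v)"
      using assms by blast
    also have "\<dots> \<le> max (L n) 0 * norm (u - v)"
      by (intro mult_right_mono) auto
    finally show "dist (g u) (g v) \<le> max (L n) 0 * dist u v"
      by (simp add: dist_norm)
  qed simp
  then have "continuous_on (cball 0 (real n)) g"
    by (rule lipschitz_on_continuous_on)
  moreover have "y \<in> interior (cball 0 (real n))"
    using n by simp
  ultimately show "isCont g y"
    using continuous_on_interior by blast
qed

lemma LC_imp_AE_continuous:
  fixes f :: "real \<Rightarrow> 'a::euclidean_space \<Rightarrow> 'a"
  assumes "LC f"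
  shows "AE t in lebesgue. continuous_on UNIV (f t)"
proof -
  have "\<forall>n::nat. \<exists>l. AE t in lebesgue. \<forall>u\<in>cball 0 (real n). \<forall>v\<in>cball 0 (real n).
          norm (f t u - f t v) \<le> l t * norm (u - v)"
  proof
    fix n :: nat
    obtain m l where "AE t in lebesgue. \<forall>u\<in>cball (0::'a) (real n). \<forall>v\<in>cball 0 (real n).
        norm (f t u) \<le> m t \<and> norm (f t u - f t v) \<le> l t * norm (u - v)"
      using assms unfolding LC_def by (meson compact_cball)
    then show "\<exists>l. AE t in lebesgue. \<forall>u\<in>cball 0 (real n). \<forall>v\<in>cball 0 (real n).
        norm (f t u - f t v) \<le> l t * norm (u - v)"
      by (intro exI[of _ l]) (erule AE_mp, rule AE_I2, blast)
  qed
  from choice[OF this] obtain L where "\<forall>n::nat. AE t in lebesgue. \<forall>u\<in>cball 0 (real n). \<forall>v\<in>cball 0 (real n).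
          norm (f t u - f t v) \<le> L n t * norm (u - v)"
    by blast
  then have "AE t in lebesgue. \<forall>n::nat. \<forall>u\<in>cball 0 (real n). \<forall>v\<in>cball 0 (real n).
          norm (f t u - f t v) \<le> L n t * norm (u - v)"
    by (simp add: AE_all_countable)
  then show ?thesis
  proof eventually_elim
    case (elim t)
    show ?case
      by (rule continuous_on_if_lipschitz_on_cballs[of "f t" "\<lambda>n. L n t"]) (use elim in simp)
  qed
qed

lemma le_if_AE_lebesgue_le:
  fixes g h :: "'a::euclidean_space \<Rightarrow> real"
  assumes "continuous_on UNIV g" "continuous_on UNIV h"
    and "AE y in lebesgue. g y \<le> h y"
  shows "g y \<le> h y"
proof -
  have "closed {y. g y \<le> h y}"
    using assms(1,2) by (intro closed_Collect_le)
  then show ?thesis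
    using mem_closed_if_AE_lebesgue_open[of UNIV "{y. g y \<le> h y}"] assms(3) by auto
qed

theorem proposition6p1:
  fixes f :: "real \<Rightarrow> 'a::euclidean_space \<Rightarrow> 'a"
    and \<alpha> \<beta> :: "real \<Rightarrow> real"
    and I :: "real set"
    and x :: "real \<Rightarrow> 'a"
  assumes "LC f"
    and "loc_integrable \<alpha>" and "loc_integrable \<beta>"
    and "AE t in lebesgue. \<beta> t \<ge> 0"
    and "AE z in lebesgue. 2 * inner (f (fst z) (snd z)) (snd z)
            \<le> \<alpha> (fst z) * (norm (snd z))\<^sup>2 + \<beta> (fst z)"
    and "caratheodory_solution f I x"
  shows "AE t in lebesgue. t \<in> I \<longrightarrow>
           2 * inner (f t (x t)) (x t) \<le> \<alpha> t * (norm (x t))\<^sup>2 + \<beta> t"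
proof -
  have "AE t in lebesgue. AE y in lebesgue. 2 * inner (f t y) y \<le> \<alpha> t * (norm y)\<^sup>2 + \<beta> t"
    using assms(5) by (rule AE_lebesgue_pair_imp_AE_AE)
  moreover have "AE t in lebesgue. continuous_on UNIV (f t)"
    using assms(1) by (rule LC_imp_AE_continuous)
  ultimately have "AE t in lebesgue. \<forall>y. 2 * inner (f t y) y \<le> \<alpha> t * (norm y)\<^sup>2 + \<beta> t"
  proof eventually_elim
    case (elim t)
    then show ?case
      by (intro allI le_if_AE_lebesgue_le) (auto intro!: continuous_intros)
  qed
  then show ?thesis
    by (rule AE_mp) (simp add: AE_I2)
qed

end
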